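(* Let $\mathcal X$ be finite and $P_0,P_1,\hat P_0,\hat P_1$ distributions on $\mathcal X$ with full support. Consider the mismatched sequential probability ratio test with thresholds $\hat\gamma_0,\hat\gamma_1>0$: with $\hat S_n=\sum_{i=1}^n\log\frac{\hat P_0(x_i)}{\hat P_1(x_i)}$, stop at $\hat\tau=\inf\{n\ge1:\hat S_n\ge\hat\gamma_0\text{ or }\hat S_n\le-\hat\gamma_1\}$ and decide $0$ if $\hat S_{\hat\tau}\ge\hat\gamma_0$ and $1$ if $\hat S_{\hat\tau}\le-\hat\gamma_1$; let $\hat\epsilon_0$ (resp. $\hat\epsilon_1$) be the probability of deciding $1$ (resp. $0$) under i.i.d. $P_0$ (resp. $P_1$) observations. If $D(P_0\|\hat P_1)-D(P_0\|\hat P_0)<0$, then $\hat\epsilon_0\to1$ as $\hat\gamma_0,\hat\gamma_1\to\infty$. Similarly, if $D(P_1\|\hat P_0)-D(P_1\|\hat P_1)<0$, then $\hat\epsilon_1\to1$ as $\hat\gamma_0,\hat\gamma_1\to\infty$.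
   Context: $D$ is relative entropy; $P_0,P_1$ are the true distributions and $\hat P_0,\hat P_1$ those used in the test. *)

theory Defs
  imports "HOL-Probability.Probability"
begin

definition rel_entropy :: "'a::finite pmf \<Rightarrow> 'a pmf \<Rightarrow> real" where
  "rel_entropy P Q = (\<Sum>x\<in>UNIV. pmf P x * ln (pmf P x / pmf Q x))"

text \<open>Mismatched log-likelihood ratio statistic: S_n = sum_{i=1}^n log (Q0 x_i / Q1 x_i),
  where the observations x_1, x_2, ... are the stream elements w!!0, w!!1, ...\<close>
definition llr_sum :: "'a pmf \<Rightarrow> 'a pmf \<Rightarrow> 'a stream \<Rightarrow> nat \<Rightarrow> real" where
  "llr_sum Q0 Q1 w n = (\<Sum>i<n. ln (pmf Q0 (w !! i) / pmf Q1 (w !! i)))"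

definition sprt_decides1 :: "'a pmf \<Rightarrow> 'a pmf \<Rightarrow> real \<Rightarrow> real \<Rightarrow> 'a stream \<Rightarrow> bool" where
  "sprt_decides1 Q0 Q1 g0 g1 w =
     (\<exists>n\<ge>1. llr_sum Q0 Q1 w n \<le> - g1 \<and>
        (\<forall>m\<in>{1..<n}. - g1 < llr_sum Q0 Q1 w m \<and> llr_sum Q0 Q1 w m < g0))"

definition sprt_decides0 :: "'a pmf \<Rightarrow> 'a pmf \<Rightarrow> real \<Rightarrow> real \<Rightarrow> 'a stream \<Rightarrow> bool" where
  "sprt_decides0 Q0 Q1 g0 g1 w =
     (\<exists>n\<ge>1. llr_sum Q0 Q1 w n \<ge> g0 \<and>
        (\<forall>m\<in>{1..<n}. - g1 < llr_sum Q0 Q1 w m \<and> llr_sum Q0 Q1 w m < g0))"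

definition sprt_eps0 :: "'a pmf \<Rightarrow> 'a pmf \<Rightarrow> 'a pmf \<Rightarrow> real \<Rightarrow> real \<Rightarrow> real" where
  "sprt_eps0 P0 Q0 Q1 g0 g1 =
     measure (stream_space (measure_pmf P0))
       {w \<in> space (stream_space (measure_pmf P0)). sprt_decides1 Q0 Q1 g0 g1 w}"

definition sprt_eps1 :: "'a pmf \<Rightarrow> 'a pmf \<Rightarrow> 'a pmf \<Rightarrow> real \<Rightarrow> real \<Rightarrow> real" where
  "sprt_eps1 P1 Q0 Q1 g0 g1 =
     measure (stream_space (measure_pmf P1))
       {w \<in> space (stream_space (measure_pmf P1)). sprt_decides0 Q0 Q1 g0 g1 w}"

end

theory Submission
  imports Defs
begin

text \<open>Under \<open>P\<close>, \<open>S\<^sub>n\<close> is a random walk whose increments have mean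
  \<open>D(P\<parallel>Q\<^sub>1) - D(P\<parallel>Q\<^sub>0) < 0\<close>; only the test distributions \<open>Q\<^sub>0, Q\<^sub>1\<close> need full support,
  so that the increments are finite. The moment generating function \<open>m\<close> of an increment has
  \<open>m 0 = 1\<close> and \<open>m' 0 < 0\<close>, hence \<open>m t < 1\<close> for some \<open>t > 0\<close>. Chernoff's bound
  \<open>P(S\<^sub>n \<ge> c) \<le> exp (- t c) m(t)^n\<close> then shows that the walk ever reaches \<open>\<gamma>\<^sub>0\<close> with
  probability at most \<open>exp (- t \<gamma>\<^sub>0) / (1 - m t)\<close>, and that it stays above \<open>-\<gamma>\<^sub>1\<close> forever
  with probability 0. Outside these two events the test decides 1, so the error probability
  tends to 1 as \<open>\<gamma>\<^sub>0 \<rightarrow> \<infinity>\<close>, whatever \<open>\<gamma>\<^sub>1\<close> does. The second claim is the first one with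
  the roles of the two hypotheses exchanged.\<close>

definition llr :: "'a pmf \<Rightarrow> 'a pmf \<Rightarrow> 'a \<Rightarrow> real" where
  "llr Q0 Q1 x = ln (pmf Q0 x / pmf Q1 x)"

definition llr_mgf :: "'a::finite pmf \<Rightarrow> 'a pmf \<Rightarrow> 'a pmf \<Rightarrow> real \<Rightarrow> real" where
  "llr_mgf P Q0 Q1 t = (\<Sum>x\<in>UNIV. pmf P x * exp (t * llr Q0 Q1 x))"

lemma llr_sum_eq: "llr_sum Q0 Q1 w n = (\<Sum>i<n. llr Q0 Q1 (w !! i))"
  by (simp add: llr_sum_def llr_def)

lemma measurable_llr_sum [measurable]:
  "(\<lambda>w. llr_sum Q0 Q1 w n) \<in> borel_measurable (stream_space (measure_pmf P))"
  unfolding llr_sum_eq by (intro borel_measurable_sum measurable_compose[OF measurable_snth]) simp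

lemma prob_space_stream_space_pmf: "prob_space (stream_space (measure_pmf P))"
  by (rule prob_space.prob_space_stream_space[OF prob_space_measure_pmf])

lemma (in prob_space) nn_integral_stream_space_prod:
  assumes [measurable]: "g \<in> borel_measurable M"
  shows "(\<integral>\<^sup>+w. (\<Prod>i<n. g (w !! i)) \<partial>stream_space M) = (\<integral>\<^sup>+x. g x \<partial>M) ^ n"
proof (induction n)
  case 0
  interpret S: prob_space "stream_space M"
    by (rule prob_space_stream_space)
  show ?case by (simp add: S.emeasure_space_1)
next
  case (Suc n)
  have "(\<integral>\<^sup>+w. (\<Prod>i<Suc n. g (w !! i)) \<partial>stream_space M)
     = (\<integral>\<^sup>+x. (\<integral>\<^sup>+w. (\<Prod>i<Suc n. g ((x ## w) !! i)) \<partial>stream_space M) \<partial>M)"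
    by (rule nn_integral_stream_space) measurable
  also have "\<dots> = (\<integral>\<^sup>+x. g x * (\<integral>\<^sup>+w. (\<Prod>i<n. g (w !! i)) \<partial>stream_space M) \<partial>M)"
    by (simp add: prod.lessThan_Suc_shift nn_integral_cmult del: prod.lessThan_Suc)
  also have "\<dots> = (\<integral>\<^sup>+x. g x \<partial>M) ^ Suc n"
    using Suc by (simp add: nn_integral_multc mult.commute)
  finally show ?case .
qed

lemma llr_mgf_nonneg: "llr_mgf P Q0 Q1 t \<ge> 0"
  unfolding llr_mgf_def by (auto intro!: sum_nonneg)

lemma llr_mgf_0: "llr_mgf P Q0 Q1 0 = 1"
  by (simp add: llr_mgf_def sum_pmf_eq_1)

lemma llr_mgf_has_real_derivative_0:
  "(llr_mgf P Q0 Q1 has_real_derivative (\<Sum>x\<in>UNIV. pmf P x * llr Q0 Q1 x)) (at 0)"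
  unfolding llr_mgf_def by (auto intro!: derivative_eq_intros simp: mult.commute)

lemma llr_mgf_less_1:
  assumes "(\<Sum>x\<in>UNIV. pmf P x * llr Q0 Q1 x) < 0"
  obtains t where "t > 0" "llr_mgf P Q0 Q1 t < 1"
proof -
  obtain d where "d > 0" and "\<And>h. 0 < h \<Longrightarrow> h < d \<Longrightarrow> llr_mgf P Q0 Q1 (0 + h) < llr_mgf P Q0 Q1 0"
    using DERIV_neg_dec_right[OF llr_mgf_has_real_derivative_0 assms] by blast
  then show thesis
    using that[of "d / 2"] by (simp add: llr_mgf_0)
qed

lemma nn_integral_exp_llr_sum:
  "(\<integral>\<^sup>+w. ennreal (exp (t * llr_sum Q0 Q1 w n)) \<partial>stream_space (measure_pmf P))
     = ennreal (llr_mgf P Q0 Q1 t) ^ n"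
proof -
  have "(\<integral>\<^sup>+w. ennreal (exp (t * llr_sum Q0 Q1 w n)) \<partial>stream_space (measure_pmf P))
      = (\<integral>\<^sup>+w. (\<Prod>i<n. ennreal (exp (t * llr Q0 Q1 (w !! i)))) \<partial>stream_space (measure_pmf P))"
    by (simp add: llr_sum_eq sum_distrib_left exp_sum prod_ennreal)
  also have "\<dots> = (\<integral>\<^sup>+x. ennreal (exp (t * llr Q0 Q1 x)) \<partial>measure_pmf P) ^ n"
    by (rule prob_space.nn_integral_stream_space_prod[OF prob_space_measure_pmf]) simp
  also have "(\<integral>\<^sup>+x. ennreal (exp (t * llr Q0 Q1 x)) \<partial>measure_pmf P) = ennreal (llr_mgf P Q0 Q1 t)"
    unfolding llr_mgf_def
    by (subst nn_integral_measure_pmf_support[where A=UNIV])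
       (auto simp: ennreal_mult[symmetric] mult.commute)
  finally show ?thesis .
qed

lemma prob_llr_sum_ge:
  assumes "t \<ge> 0"
  shows "measure (stream_space (measure_pmf P))
           {w \<in> space (stream_space (measure_pmf P)). c \<le> llr_sum Q0 Q1 w n}
     \<le> exp (- t * c) * llr_mgf P Q0 Q1 t ^ n"
proof -
  let ?S = "stream_space (measure_pmf P)"
  interpret S: prob_space ?S
    by (rule prob_space_stream_space_pmf)
  let ?A = "{w \<in> space ?S. c \<le> llr_sum Q0 Q1 w n}"
  have "emeasure ?S ?A = (\<integral>\<^sup>+w. indicator ?A w \<partial>?S)"
    by simp
  also have "\<dots> \<le> (\<integral>\<^sup>+w. ennreal (exp (- t * c)) * ennreal (exp (t * llr_sum Q0 Q1 w n)) \<partial>?S)"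
  proof (intro nn_integral_mono)
    fix w
    have "c \<le> llr_sum Q0 Q1 w n \<Longrightarrow> 1 \<le> exp (- t * c) * exp (t * llr_sum Q0 Q1 w n)"
      using assms by (simp add: exp_add[symmetric] mult.commute[of c] mult_left_mono)
    then show "indicator ?A w \<le> ennreal (exp (- t * c)) * ennreal (exp (t * llr_sum Q0 Q1 w n))"
      by (auto split: split_indicator simp: ennreal_mult[symmetric])
  qed
  also have "\<dots> = ennreal (exp (- t * c) * llr_mgf P Q0 Q1 t ^ n)"
    by (simp add: nn_integral_cmult nn_integral_exp_llr_sum ennreal_mult ennreal_power llr_mgf_nonneg)
  finally show ?thesis
    by (simp add: S.emeasure_eq_measure llr_mgf_nonneg)
qed

lemma prob_llr_sum_ever_ge:
  assumes "t \<ge> 0" and "llr_mgf P Q0 Q1 t < 1"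
  shows "measure (stream_space (measure_pmf P))
           {w \<in> space (stream_space (measure_pmf P)). \<exists>n. c \<le> llr_sum Q0 Q1 w n}
     \<le> exp (- t * c) / (1 - llr_mgf P Q0 Q1 t)"
proof -
  let ?S = "stream_space (measure_pmf P)"
  interpret S: prob_space ?S
    by (rule prob_space_stream_space_pmf)
  define m where "m = llr_mgf P Q0 Q1 t"
  have m: "0 \<le> m" "m < 1"
    using assms llr_mgf_nonneg unfolding m_def by auto
  let ?A = "\<lambda>n. {w \<in> space ?S. c \<le> llr_sum Q0 Q1 w n}"
  have A_le: "measure ?S (?A n) \<le> exp (- t * c) * m ^ n" for n
    using prob_llr_sum_ge[OF assms(1)] unfolding m_def .
  have geometric: "(\<lambda>n. exp (- t * c) * m ^ n) sums (exp (- t * c) / (1 - m))"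
    using sums_mult[OF geometric_sums[of m]] m by (simp add: divide_inverse)
  have "summable (\<lambda>n. measure ?S (?A n))"
    using A_le by (intro summable_comparison_test_ev[OF _ sums_summable[OF geometric]]) auto
  then have "measure ?S (\<Union>n. ?A n) \<le> (\<Sum>n. measure ?S (?A n))"
    by (intro S.finite_measure_subadditive_countably) auto
  also have "\<dots> \<le> exp (- t * c) / (1 - m)"
    using sums_le[OF A_le summable_sums[OF \<open>summable _\<close>] geometric] .
  finally show ?thesis
    unfolding m_def by (simp add: Collect_ex_eq[symmetric])
qed

lemma prob_llr_sum_always_gt:
  assumes "t \<ge> 0" and "llr_mgf P Q0 Q1 t < 1"
  shows "measure (stream_space (measure_pmf P))
           {w \<in> space (stream_space (measure_pmf P)). \<forall>n\<ge>1. c < llr_sum Q0 Q1 w n} = 0"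
proof -
  let ?S = "stream_space (measure_pmf P)"
  interpret S: prob_space ?S
    by (rule prob_space_stream_space_pmf)
  define m where "m = llr_mgf P Q0 Q1 t"
  have m: "0 \<le> m" "m < 1"
    using assms llr_mgf_nonneg unfolding m_def by auto
  let ?A = "{w \<in> space ?S. \<forall>n\<ge>1. c < llr_sum Q0 Q1 w n}"
  have bound: "measure ?S ?A \<le> exp (- t * c) * m ^ Suc n" for n
  proof -
    have "measure ?S ?A \<le> measure ?S {w \<in> space ?S. c \<le> llr_sum Q0 Q1 w (Suc n)}"
      by (intro S.finite_measure_mono) (auto intro: less_imp_le)
    also have "\<dots> \<le> exp (- t * c) * m ^ Suc n"
      using prob_llr_sum_ge[OF assms(1)] unfolding m_def .
    finally show ?thesis .
  qed
  have "(\<lambda>n. exp (- t * c) * m ^ Suc n) \<longlonglongrightarrow> 0"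
    using m by (intro tendsto_mult_right_zero LIMSEQ_power_zero[THEN LIMSEQ_Suc]) auto
  then have "measure ?S ?A \<le> 0"
    using LIMSEQ_le_const bound by blast
  then show ?thesis
    by (simp add: measure_le_0_iff)
qed

lemma sprt_decides1_if_never_ge:
  assumes "\<forall>n. llr_sum Q0 Q1 w n < g0" and "\<exists>n\<ge>1. llr_sum Q0 Q1 w n \<le> - g1"
  shows "sprt_decides1 Q0 Q1 g0 g1 w"
proof -
  obtain n where n: "n \<ge> 1 \<and> llr_sum Q0 Q1 w n \<le> - g1"
    and least: "\<forall>k<n. \<not> (k \<ge> 1 \<and> llr_sum Q0 Q1 w k \<le> - g1)"
    using assms(2) exists_least_iff[of "\<lambda>n. n \<ge> 1 \<and> llr_sum Q0 Q1 w n \<le> - g1"] by blast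
  show ?thesis
    unfolding sprt_decides1_def using n least assms(1) by (intro exI[of _ n]) (auto simp: not_le)
qed

lemma sprt_eps0_ge:
  assumes "t \<ge> 0" and "llr_mgf P Q0 Q1 t < 1"
  shows "1 - exp (- t * g0) / (1 - llr_mgf P Q0 Q1 t) \<le> sprt_eps0 P Q0 Q1 g0 g1"
proof -
  let ?S = "stream_space (measure_pmf P)"
  interpret S: prob_space ?S
    by (rule prob_space_stream_space_pmf)
  define Decide1 where "Decide1 = {w \<in> space ?S. sprt_decides1 Q0 Q1 g0 g1 w}"
  define Up where "Up = {w \<in> space ?S. \<exists>n. g0 \<le> llr_sum Q0 Q1 w n}"
  define Stay where "Stay = {w \<in> space ?S. \<forall>n\<ge>1. - g1 < llr_sum Q0 Q1 w n}"
  have [measurable]: "Decide1 \<in> sets ?S" "Up \<in> sets ?S" "Stay \<in> sets ?S"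
    unfolding Decide1_def Up_def Stay_def sprt_decides1_def by measurable
  have "w \<in> Decide1 \<union> Up \<union> Stay" if "w \<in> space ?S" for w
  proof (cases "w \<in> Up \<union> Stay")
    case False
    then have "sprt_decides1 Q0 Q1 g0 g1 w"
      using that by (intro sprt_decides1_if_never_ge) (auto simp: Up_def Stay_def not_le not_less)
    then show ?thesis
      using that by (simp add: Decide1_def)
  qed auto
  then have "1 \<le> measure ?S (Decide1 \<union> Up \<union> Stay)"
    using S.finite_measure_mono[of "space ?S"] by (simp add: S.prob_space subsetI)
  also have "\<dots> \<le> measure ?S Decide1 + measure ?S Up + measure ?S Stay"
    using measure_Un_le[of "Decide1 \<union> Up" ?S Stay] measure_Un_le[of Decide1 ?S Up] by auto
  finally show ?thesis
    using prob_llr_sum_ever_ge[OF assms, of g0] prob_llr_sum_always_gt[OF assms, of "- g1"]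
    unfolding sprt_eps0_def Decide1_def Up_def Stay_def by linarith
qed

lemma sprt_eps0_tendsto_1:
  fixes P Q0 Q1 :: "'a::finite pmf"
  assumes "(\<Sum>x\<in>UNIV. pmf P x * llr Q0 Q1 x) < 0" and "filterlim g0 at_top F"
  shows "((\<lambda>x. sprt_eps0 P Q0 Q1 (g0 x) (g1 x)) \<longlongrightarrow> 1) F"
proof -
  obtain t where t: "t > 0" "llr_mgf P Q0 Q1 t < 1"
    using llr_mgf_less_1[OF assms(1)] .
  have "filterlim (\<lambda>x. - t * g0 x) at_bot F"
    using t by (intro filterlim_tendsto_neg_mult_at_bot[OF tendsto_const _ assms(2)]) auto
  then have exp_lim: "((\<lambda>x. exp (- t * g0 x)) \<longlongrightarrow> 0) F"
    by (rule filterlim_compose[OF exp_at_bot])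
  have lower: "((\<lambda>x. 1 - exp (- t * g0 x) / (1 - llr_mgf P Q0 Q1 t)) \<longlongrightarrow> 1) F"
    using tendsto_diff[OF tendsto_const[of 1] tendsto_divide_zero[OF exp_lim]] by simp
  have upper: "sprt_eps0 P Q0 Q1 a b \<le> 1" for a b
    unfolding sprt_eps0_def by (rule prob_space.prob_le_1[OF prob_space_stream_space_pmf])
  show ?thesis
    using sprt_eps0_ge[OF less_imp_le[OF t(1)] t(2)] upper
    by (intro tendsto_sandwich[OF always_eventually always_eventually lower tendsto_const]) auto
qed

lemma rel_entropy_diff_eq_mean_llr:
  assumes "set_pmf Q0 = UNIV" and "set_pmf Q1 = UNIV"
  shows "rel_entropy P Q1 - rel_entropy P Q0 = (\<Sum>x\<in>UNIV. pmf P x * llr Q0 Q1 x)"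
proof -
  have "pmf Q0 x > 0" "pmf Q1 x > 0" for x
    using assms by (auto intro: pmf_positive)
  moreover have "p * ln (p / b) - p * ln (p / a) = p * ln (a / b)" if "p \<ge> 0" "a > 0" "b > 0"
    for p a b :: real
    using that by (cases "p = 0") (simp_all add: ln_div algebra_simps)
  ultimately show ?thesis
    unfolding rel_entropy_def llr_def sum_subtractf[symmetric] by (intro sum.cong) auto
qed

lemma llr_sum_swap:
  assumes "set_pmf Q0 = UNIV" and "set_pmf Q1 = UNIV"
  shows "llr_sum Q1 Q0 w n = - llr_sum Q0 Q1 w n"
proof -
  have "pmf Q0 x > 0" "pmf Q1 x > 0" for x
    using assms by (auto intro: pmf_positive)
  then show ?thesis
    unfolding llr_sum_def sum_negf[symmetric] by (intro sum.cong) (auto simp: ln_div)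
qed

lemma sprt_eps1_eq_sprt_eps0_swap:
  assumes "set_pmf Q0 = UNIV" and "set_pmf Q1 = UNIV"
  shows "sprt_eps1 P Q0 Q1 g0 g1 = sprt_eps0 P Q1 Q0 g1 g0"
proof -
  have "sprt_decides0 Q0 Q1 g0 g1 w = sprt_decides1 Q1 Q0 g1 g0 w" for w
    unfolding sprt_decides0_def sprt_decides1_def llr_sum_swap[OF assms] by (auto simp: minus_less_iff)
  then show ?thesis
    unfolding sprt_eps0_def sprt_eps1_def by simp
qed

theorem theorem7:
  fixes P0 P1 P0h P1h :: "'a::finite pmf"
  assumes "set_pmf P0 = UNIV" and "set_pmf P1 = UNIV"
      and "set_pmf P0h = UNIV" and "set_pmf P1h = UNIV"
  shows "(rel_entropy P0 P1h - rel_entropy P0 P0h < 0 \<longrightarrow>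
            ((\<lambda>(g0, g1). sprt_eps0 P0 P0h P1h g0 g1) \<longlongrightarrow> 1) (at_top \<times>\<^sub>F at_top))
       \<and> (rel_entropy P1 P0h - rel_entropy P1 P1h < 0 \<longrightarrow>
            ((\<lambda>(g0, g1). sprt_eps1 P1 P0h P1h g0 g1) \<longlongrightarrow> 1) (at_top \<times>\<^sub>F at_top))"
proof (intro conjI impI)
  assume "rel_entropy P0 P1h - rel_entropy P0 P0h < 0"
  then have "(\<Sum>x\<in>UNIV. pmf P0 x * llr P0h P1h x) < 0"
    using rel_entropy_diff_eq_mean_llr[OF assms(3,4)] by simp
  from sprt_eps0_tendsto_1[OF this filterlim_fst, of snd]
  show "((\<lambda>(g0, g1). sprt_eps0 P0 P0h P1h g0 g1) \<longlongrightarrow> 1) (at_top \<times>\<^sub>F at_top)"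
    by (simp add: case_prod_beta')
next
  assume "rel_entropy P1 P0h - rel_entropy P1 P1h < 0"
  then have "(\<Sum>x\<in>UNIV. pmf P1 x * llr P1h P0h x) < 0"
    using rel_entropy_diff_eq_mean_llr[OF assms(4,3)] by simp
  from sprt_eps0_tendsto_1[OF this filterlim_snd, of fst]
  show "((\<lambda>(g0, g1). sprt_eps1 P1 P0h P1h g0 g1) \<longlongrightarrow> 1) (at_top \<times>\<^sub>F at_top)"
    by (simp add: case_prod_beta' sprt_eps1_eq_sprt_eps0_swap[OF assms(3,4)])
qed

end
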